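(* Let $X$ be a real Banach space with the Ball Huskable Property ($BHP$). Then for every separable closed subspace $Y$ of $X$ there exists a separable closed subspace $Z$ of $X$ with $Y\subseteq Z$ such that $Z$ has $BHP$.
   Context: For a real Banach space $X$, $B_X$ denotes its closed unit ball. $X$ has the Ball Huskable Property ($BHP$) if for every $\varepsilon>0$ there is a nonempty relatively weakly open subset of $B_X$ (i.e., a nonempty set of the form $U\cap B_X$ with $U$ open in the weak topology of $X$) of diameter less than $\varepsilon$. *)

theory Defs
  imports "HOL-Analysis.Analysis"
begin

definition bdd_lin_functional_on :: "'a::real_normed_vector set \<Rightarrow> ('a \<Rightarrow> real) \<Rightarrow> bool" where
  "bdd_lin_functional_on Z f \<longleftrightarrow>
     (\<forall>x\<in>Z. \<forall>y\<in>Z. f (x + y) = f x + f y) \<and>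
     (\<forall>c. \<forall>x\<in>Z. f (c *\<^sub>R x) = c * f x) \<and>
     (\<exists>C. \<forall>x\<in>Z. \<bar>f x\<bar> \<le> C * norm x)"

definition weak_topology_on :: "'a::real_normed_vector set \<Rightarrow> 'a topology" where
  "weak_topology_on Z = topology_generated_by
     {{z \<in> Z. f z \<in> V} | f V. bdd_lin_functional_on Z f \<and> open V}"

definition unit_ball_of :: "'a::real_normed_vector set \<Rightarrow> 'a set" where
  "unit_ball_of Z = {z \<in> Z. norm z \<le> 1}"

definition BHP :: "'a::real_normed_vector set \<Rightarrow> bool" where
  "BHP Z \<longleftrightarrow> (\<forall>\<epsilon>>0. \<exists>U. openin (weak_topology_on Z) U \<and>
       U \<inter> unit_ball_of Z \<noteq> {} \<and> diameter (U \<inter> unit_ball_of Z) < \<epsilon>)"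

end

theory Submission
  imports Defs
begin

text \<open>Choose, for each \<open>n\<close>, a weakly open slice of \<open>B_X\<close> of diameter below \<open>1/(n+1)\<close> and a
  point \<open>x\<^sub>n\<close> in it. A weakly open set of \<open>X\<close> meets a subspace \<open>Z\<close> in a weakly open set of \<open>Z\<close>
  (functionals on \<open>X\<close> restrict to \<open>Z\<close>), and \<open>B_Z \<subseteq> B_X\<close>, so any \<open>Z\<close> containing all the \<open>x\<^sub>n\<close>
  has BHP. It remains to take for \<open>Z\<close> the closed linear span of the \<open>x\<^sub>n\<close> together with a
  countable dense subset of \<open>Y\<close>; it is separable because the rational linear combinations
  of a countable set are countable and dense in it.\<close>

definition rational_span :: "'a::real_vector set \<Rightarrow> 'a set" where
  "rational_span A = (\<lambda>l. \<Sum>(q, v)\<leftarrow>l. of_rat q *\<^sub>R v) ` lists (UNIV \<times> A)"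

lemma countable_rational_span: "countable A \<Longrightarrow> countable (rational_span A)"
  unfolding rational_span_def by (intro countable_image countable_lists countable_SIGMA) auto

lemma zero_in_rational_span: "0 \<in> rational_span A"
  unfolding rational_span_def by (auto intro!: image_eqI[where x="[]"])

lemma subset_rational_span: "A \<subseteq> rational_span A"
proof
  fix a assume "a \<in> A"
  then show "a \<in> rational_span A"
    unfolding rational_span_def by (auto intro!: image_eqI[where x="[(1, a)]"])
qed

lemma rational_span_add:
  assumes "a \<in> rational_span A" "b \<in> rational_span A"
  shows "a + b \<in> rational_span A"
proof -
  obtain l1 l2 where "l1 \<in> lists (UNIV \<times> A)" "l2 \<in> lists (UNIV \<times> A)"
    and "a = (\<Sum>(q, v)\<leftarrow>l1. of_rat q *\<^sub>R v)" "b = (\<Sum>(q, v)\<leftarrow>l2. of_rat q *\<^sub>R v)"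
    using assms unfolding rational_span_def by blast
  then show ?thesis
    unfolding rational_span_def by (auto intro!: image_eqI[where x="l1 @ l2"])
qed

lemma rational_span_scaleR:
  assumes "a \<in> rational_span A" "c \<in> \<rat>"
  shows "c *\<^sub>R a \<in> rational_span A"
proof -
  obtain l where l: "l \<in> lists (UNIV \<times> A)" "a = (\<Sum>(q, v)\<leftarrow>l. of_rat q *\<^sub>R v)"
    using assms(1) unfolding rational_span_def by blast
  obtain r where r: "c = of_rat r"
    using assms(2) Rats_cases by blast
  let ?l = "map (\<lambda>(q, v). (r * q, v)) l"
  have "(\<Sum>(q, v)\<leftarrow>?l. of_rat q *\<^sub>R v) = of_rat r *\<^sub>R (\<Sum>(q, v)\<leftarrow>l. of_rat q *\<^sub>R v)"
    by (induction l) (auto simp: of_rat_mult scaleR_add_right)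
  moreover have "?l \<in> lists (UNIV \<times> A)"
    using l(1) by auto
  ultimately show ?thesis
    using l r unfolding rational_span_def by (metis image_eqI)
qed

text \<open>Real scalars are reached as limits of rational ones.\<close>

lemma subspace_closure_of_rational_subspace:
  fixes C :: "'a::real_normed_vector set"
  assumes "0 \<in> C"
    and add: "\<And>x y. x \<in> C \<Longrightarrow> y \<in> C \<Longrightarrow> x + y \<in> C"
    and scale: "\<And>q x. x \<in> C \<Longrightarrow> q \<in> \<rat> \<Longrightarrow> q *\<^sub>R x \<in> C"
  shows "subspace (closure C)"
  unfolding subspace_def
proof (intro conjI ballI allI)
  show "0 \<in> closure C"
    using assms(1) closure_subset by blast
next
  fix x y assume "x \<in> closure C" "y \<in> closure C"
  then obtain a b where a: "\<forall>n. a n \<in> C" "a \<longlonglongrightarrow> x" and b: "\<forall>n. b n \<in> C" "b \<longlonglongrightarrow> y"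
    unfolding closure_sequential by blast
  have "(\<lambda>n. a n + b n) \<longlonglongrightarrow> x + y"
    using a b by (auto intro: tendsto_add)
  moreover have "\<forall>n. a n + b n \<in> C"
    using a b add by blast
  ultimately show "x + y \<in> closure C"
    unfolding closure_sequential by (intro exI[where x="\<lambda>n. a n + b n"]) simp
next
  fix c :: real and x assume "x \<in> closure C"
  then obtain a where a: "\<forall>n. a n \<in> C" "a \<longlonglongrightarrow> x"
    unfolding closure_sequential by blast
  have "c \<in> closure \<rat>"
    by (simp add: Rats_closure_real)
  then obtain q where q: "\<forall>n. q n \<in> \<rat>" "q \<longlonglongrightarrow> c"
    unfolding closure_sequential by blast
  have "(\<lambda>n. q n *\<^sub>R a n) \<longlonglongrightarrow> c *\<^sub>R x"
    using a q by (auto intro: tendsto_scaleR)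
  moreover have "\<forall>n. q n *\<^sub>R a n \<in> C"
    using a q scale by blast
  ultimately show "c *\<^sub>R x \<in> closure C"
    unfolding closure_sequential by (intro exI[where x="\<lambda>n. q n *\<^sub>R a n"]) simp
qed

lemma subspace_closure_rational_span:
  fixes A :: "'a::real_normed_vector set"
  shows "subspace (closure (rational_span A))"
  by (rule subspace_closure_of_rational_subspace)
    (simp_all add: zero_in_rational_span rational_span_add rational_span_scaleR)

lemma separable_space_closure:
  assumes "countable C"
  shows "separable_space (subtopology euclidean (closure C))"
  unfolding separable_space_def
proof (intro exI conjI)
  show "C \<subseteq> topspace (subtopology euclidean (closure C))"
    using closure_subset by auto
  have "closure C \<inter> C = C"
    using closure_subset by blast
  then show "subtopology euclidean (closure C) closure_of C = topspace (subtopology euclidean (closure C))"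
    unfolding closure_of_subtopology by simp
qed (fact assms)

lemma separable_space_imp_subset_closure:
  assumes "separable_space (subtopology euclidean Y)"
  obtains D where "countable D" "Y \<subseteq> closure D"
proof -
  obtain D where "countable D" "D \<subseteq> Y" "subtopology euclidean Y closure_of D = Y"
    using assms unfolding separable_space_def by auto
  then have "Y \<subseteq> closure D"
    by (metis closure_of_subtopology euclidean_closure_of inf.absorb_iff2 inf_le2)
  then show thesis
    using \<open>countable D\<close> that by blast
qed

lemma bdd_lin_functional_on_subset:
  "bdd_lin_functional_on W f \<Longrightarrow> Z \<subseteq> W \<Longrightarrow> bdd_lin_functional_on Z f"
  unfolding bdd_lin_functional_on_def by blast

lemma openin_weak_topology_on_restrict:
  assumes "Z \<subseteq> W" and "openin (weak_topology_on W) U"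
  shows "openin (weak_topology_on Z) (U \<inter> Z)"
proof -
  let ?S = "\<lambda>Z. {{z \<in> Z. f z \<in> V} | f V. bdd_lin_functional_on Z f \<and> open V}"
  have "generate_topology_on (?S W) U"
    using assms(2) unfolding weak_topology_on_def openin_topology_generated_by_iff .
  then have "generate_topology_on (?S Z) (U \<inter> Z)"
  proof (induction rule: generate_topology_on.induct)
    case Empty
    then show ?case by (simp add: generate_topology_on.Empty)
  next
    case (Int a b)
    have "a \<inter> b \<inter> Z = (a \<inter> Z) \<inter> (b \<inter> Z)" by blast
    then show ?case
      using Int by (simp add: generate_topology_on.Int)
  next
    case (UN K)
    have "generate_topology_on (?S Z) (\<Union>((\<lambda>k. k \<inter> Z) ` K))"
      using UN by (intro generate_topology_on.UN) auto
    moreover have "\<Union>K \<inter> Z = \<Union>((\<lambda>k. k \<inter> Z) ` K)" by blast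
    ultimately show ?case by (simp only:)
  next
    case (Basis s)
    then obtain f V where s: "s = {z \<in> W. f z \<in> V}" and "bdd_lin_functional_on W f" "open V"
      by blast
    then have "{z \<in> Z. f z \<in> V} \<in> ?S Z"
      using assms(1) bdd_lin_functional_on_subset by blast
    moreover have "s \<inter> Z = {z \<in> Z. f z \<in> V}"
      using assms(1) s by blast
    ultimately show ?case
      by (simp add: generate_topology_on.Basis)
  qed
  then show ?thesis
    unfolding weak_topology_on_def openin_topology_generated_by_iff .
qed

lemma BHP_witnessed_by_countable_set:
  assumes "BHP (UNIV :: 'a::real_normed_vector set)"
  obtains S where "countable S" "\<And>Z. S \<subseteq> (Z :: 'a set) \<Longrightarrow> BHP Z"
proof -
  have "\<forall>n::nat. \<exists>U x. openin (weak_topology_on UNIV) U \<and> x \<in> U \<inter> unit_ball_of UNIV \<and>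
      diameter (U \<inter> unit_ball_of (UNIV :: 'a set)) < 1 / real (Suc n)"
  proof
    fix n :: nat
    obtain U where "openin (weak_topology_on UNIV) U" "U \<inter> unit_ball_of UNIV \<noteq> {}"
      "diameter (U \<inter> unit_ball_of (UNIV :: 'a set)) < 1 / real (Suc n)"
      using assms unfolding BHP_def by (meson of_nat_0_less_iff zero_less_Suc divide_pos_pos zero_less_one)
    then show "\<exists>U x. openin (weak_topology_on UNIV) U \<and> x \<in> U \<inter> unit_ball_of UNIV \<and>
        diameter (U \<inter> unit_ball_of (UNIV :: 'a set)) < 1 / real (Suc n)"
      by blast
  qed
  then obtain U x where U: "\<And>n. openin (weak_topology_on UNIV) (U n)"
    and x: "\<And>n. x n \<in> U n \<inter> unit_ball_of UNIV"
    and diam: "\<And>n. diameter (U n \<inter> unit_ball_of (UNIV :: 'a set)) < 1 / real (Suc n)"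
    by metis
  have "BHP Z" if "range x \<subseteq> Z" for Z
    unfolding BHP_def
  proof (intro allI impI)
    fix e :: real assume "e > 0"
    then obtain n where n: "1 / real (Suc n) < e"
      by (metis nat_approx_posE)
    have slice: "U n \<inter> Z \<inter> unit_ball_of Z \<subseteq> U n \<inter> unit_ball_of UNIV"
      unfolding unit_ball_of_def by auto
    have "bounded (U n \<inter> unit_ball_of (UNIV :: 'a set))"
      unfolding unit_ball_of_def by (rule bounded_subset[of "cball 0 1"]) auto
    then have "diameter (U n \<inter> Z \<inter> unit_ball_of Z) < e"
      using diameter_subset[OF slice] diam[of n] n by linarith
    moreover have "openin (weak_topology_on Z) (U n \<inter> Z)"
      using U by (rule openin_weak_topology_on_restrict[rotated]) simp
    moreover have "x n \<in> U n \<inter> Z \<inter> unit_ball_of Z"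
      using x[of n] that unfolding unit_ball_of_def by auto
    ultimately show "\<exists>V. openin (weak_topology_on Z) V \<and> V \<inter> unit_ball_of Z \<noteq> {} \<and>
        diameter (V \<inter> unit_ball_of Z) < e"
      by blast
  qed
  then show thesis
    using that[of "range x"] by blast
qed

theorem mainTheorem3:
  assumes "BHP (UNIV :: 'a::banach set)"
  shows "\<forall>Y :: 'a set. subspace Y \<and> closed Y \<and> separable_space (subtopology euclidean Y) \<longrightarrow>
           (\<exists>Z. subspace Z \<and> closed Z \<and> separable_space (subtopology euclidean Z) \<and>
                Y \<subseteq> Z \<and> BHP Z)"
proof (intro allI impI)
  fix Y :: "'a set"
  assume "subspace Y \<and> closed Y \<and> separable_space (subtopology euclidean Y)"
  then obtain D where D: "countable D" "Y \<subseteq> closure D"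
    using separable_space_imp_subset_closure by blast
  obtain S :: "'a set" where S: "countable S" "\<And>Z. S \<subseteq> Z \<Longrightarrow> BHP Z"
    using BHP_witnessed_by_countable_set[OF assms] by blast
  define Z where "Z = closure (rational_span (D \<union> S))"
  have "D \<union> S \<subseteq> Z"
    unfolding Z_def using subset_rational_span closure_subset by (rule order_trans)
  then have "Y \<subseteq> Z"
    using D(2) closure_minimal[of D Z] unfolding Z_def by blast
  moreover have "separable_space (subtopology euclidean Z)"
    unfolding Z_def using D(1) S(1) by (intro separable_space_closure countable_rational_span) simp
  moreover have "subspace Z" "closed Z"
    unfolding Z_def by (simp_all add: subspace_closure_rational_span)
  moreover have "BHP Z"
    using S(2) \<open>D \<union> S \<subseteq> Z\<close> by blast
  ultimately show "\<exists>Z. subspace Z \<and> closed Z \<and> separable_space (subtopology euclidean Z) \<and>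
      Y \<subseteq> Z \<and> BHP Z"
    by blast
qed

end
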